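(* Let $F_t$, $t\in[0,1]$, be a one-parameter family on a complete metric space $(\mathbb X,d)$ satisfying (H1) and (H2). If $A^\bullet$ is any upper transition attractor of $F_t$, then (i) $F_1(A^\bullet)=A^\bullet$. If in addition $F_t$ satisfies (H3), then (ii) $Q\subseteq A^\bullet$, and in particular $A_\bullet\subseteq A^\bullet$, where $A_\bullet$ is the lower transition attractor.
   Context: Let $(\mathbb X,d)$ be a complete metric space. A one-parameter family is $F_t=\{f_{(1,t)},\dots,f_{(N,t)}\}$, $t\in[0,1]$, $N\ge2$, of continuous self-maps of $\mathbb X$. $\mathrm{Lip}(f,d)=\sup_{x\ne y}d(f(x),f(y))/d(x,y)$ and $\mathrm{Lip}(F_t,d)=\max_i\mathrm{Lip}(f_{(i,t)},d)$. Conditions: (H1) for every $x\in\mathbb X$ and every $i$, the map $t\mapsto f_{(i,t)}(x)$ is continuous on $[0,1]$; (H2) $\mathrm{Lip}(F_t,d)<1$ for all $t\in[0,1)$; (H3) for each $i$ the limit $q_i=\lim_{t\to1^-}q_{i,t}$ exists, where $q_{i,t}$ is the unique fixed point of $f_{(i,t)}$ for $t\in[0,1)$; $Q=\{q_1,\dots,q_N\}$. For an IFS $F$ and $S\subseteq\mathbb X$, $F(S)=\overline{\bigcup_{f\in F}f(S)}$. For $t\in[0,1)$, $A_t$ is the attractor of $F_t$, the unique nonempty compact set with $F_t(A_t)=A_t$. With $h$ the Hausdorff metric, an upper transition attractor is a compact set $A^\bullet$ for which there is an increasing sequence $t_n\in[0,1)$, $t_n\to1$, with $h(A_{t_n},A^\bullet)\to0$.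 The lower transition attractor is the smallest (w.r.t. inclusion) set $A_\bullet$ with $F_1(A_\bullet)=A_\bullet$ and $Q\subseteq A_\bullet$. *)

theory Defs
  imports "HOL-Analysis.Analysis"
begin

text \<open>A one-parameter family: maps f i t, indices i < N, parameter t in [0,1].\<close>

definition lip_const :: "('a::metric_space \<Rightarrow> 'a) \<Rightarrow> ereal" where
  "lip_const g = (SUP p\<in>{p. fst p \<noteq> snd p}. ereal (dist (g (fst p)) (g (snd p)) / dist (fst p) (snd p)))"

definition lip_family :: "(nat \<Rightarrow> real \<Rightarrow> 'a::metric_space \<Rightarrow> 'a) \<Rightarrow> nat \<Rightarrow> real \<Rightarrow> ereal" where
  "lip_family f N t = Max ((\<lambda>i. lip_const (f i t)) ` {..<N})"

definition ifs_img :: "(nat \<Rightarrow> real \<Rightarrow> 'a::topological_space \<Rightarrow> 'a) \<Rightarrow> nat \<Rightarrow> real \<Rightarrow> 'a set \<Rightarrow> 'a set" where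
  "ifs_img f N t S = closure (\<Union>i<N. f i t ` S)"

definition attractor :: "(nat \<Rightarrow> real \<Rightarrow> 'a::metric_space \<Rightarrow> 'a) \<Rightarrow> nat \<Rightarrow> real \<Rightarrow> 'a set" where
  "attractor f N t = (THE A. A \<noteq> {} \<and> compact A \<and> ifs_img f N t A = A)"

definition hausdorff_dist :: "'a::metric_space set \<Rightarrow> 'a set \<Rightarrow> real" where
  "hausdorff_dist A B = max (SUP a\<in>A. infdist a B) (SUP b\<in>B. infdist b A)"

text \<open>Upper transition attractor (a nonempty compact set, as the Hausdorff metric lives
  on nonempty compact sets).\<close>
definition upper_transition_attractor ::
  "(nat \<Rightarrow> real \<Rightarrow> 'a::metric_space \<Rightarrow> 'a) \<Rightarrow> nat \<Rightarrow> 'a set \<Rightarrow> bool" where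
  "upper_transition_attractor f N B \<longleftrightarrow> B \<noteq> {} \<and> compact B \<and>
     (\<exists>tn::nat \<Rightarrow> real. incseq tn \<and> (\<forall>n. tn n \<in> {0..<1}) \<and> tn \<longlonglongrightarrow> 1 \<and>
        (\<lambda>n. hausdorff_dist (attractor f N (tn n)) B) \<longlonglongrightarrow> 0)"

definition fixpt :: "('a \<Rightarrow> 'a) \<Rightarrow> 'a" where
  "fixpt g = (THE x. g x = x)"

definition lower_transition_attractor ::
  "(nat \<Rightarrow> real \<Rightarrow> 'a::metric_space \<Rightarrow> 'a) \<Rightarrow> nat \<Rightarrow> 'a set \<Rightarrow> 'a set \<Rightarrow> bool" where
  "lower_transition_attractor f N Q B \<longleftrightarrow> ifs_img f N 1 B = B \<and> Q \<subseteq> B \<and>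
     (\<forall>C. ifs_img f N 1 C = C \<and> Q \<subseteq> C \<longrightarrow> B \<subseteq> C)"

end

theory Submission
  imports Defs
begin

text \<open>For t < 1 all maps f_{i,t} are contractions, so the attractor A_t exists, is unique and
  contains the fixed points q_{i,t}; moreover every f_{i,t} is nonexpansive. Along a sequence
  t_n \<rightarrow> 1 with A_{t_n} \<rightarrow> A^\<bullet> in the Hausdorff metric, the maps f_{i,t_n} converge pointwise
  by (H1), hence uniformly on the compact set A^\<bullet> by equicontinuity, to f_{i,1}. Passing to the
  limit in F_{t_n}(A_{t_n}) = A_{t_n} gives F_1(A^\<bullet>) = A^\<bullet>, and the limits q_i of the points
  q_{i,t_n} \<in> A_{t_n} lie in A^\<bullet>. Minimality of the lower transition attractor then yields
  A_\<bullet> \<subseteq> A^\<bullet>.\<close>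

lemma lip_family_less_one_contraction:
  fixes f :: "nat \<Rightarrow> real \<Rightarrow> 'a::metric_space \<Rightarrow> 'a"
  assumes "0 < N" and "lip_family f N t < 1"
  shows "\<exists>c. 0 \<le> c \<and> c < 1 \<and> (\<forall>i<N. \<forall>x y. dist (f i t x) (f i t y) \<le> c * dist x y)"
proof -
  define L where "L = lip_family f N t"
  have lip_le: "lip_const (f i t) \<le> L" if "i < N" for i
    unfolding L_def lip_family_def using that by (intro Max_ge) auto
  have "L \<noteq> \<infinity>" using assms(2) L_def by auto
  define c where "c = max 0 (real_of_ereal L)"
  have "c < 1"
    using assms(2) \<open>L \<noteq> \<infinity>\<close> unfolding L_def c_def by (cases "lip_family f N t") auto
  moreover have "dist (f i t x) (f i t y) \<le> c * dist x y" if "i < N" for i x y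
  proof (cases "x = y")
    case False
    have "ereal (dist (f i t x) (f i t y) / dist x y) \<le> lip_const (f i t)"
      unfolding lip_const_def by (rule SUP_upper2[of "(x, y)"]) (use False in auto)
    also have "\<dots> \<le> L" using lip_le that .
    finally have "dist (f i t x) (f i t y) / dist x y \<le> c"
      using \<open>L \<noteq> \<infinity>\<close> unfolding c_def by (cases L) auto
    then show ?thesis using False by (simp add: divide_le_eq mult.commute)
  qed simp
  moreover have "0 \<le> c" unfolding c_def by simp
  ultimately show ?thesis by blast
qed

lemma contraction_fixpoint_in_invariant:
  fixes g :: "'a::metric_space \<Rightarrow> 'a"
  assumes c: "0 \<le> c" "c < 1" and lip: "\<And>x y. dist (g x) (g y) \<le> c * dist x y"
    and A: "compact A" "A \<noteq> {}" "g ` A \<subseteq> A" and "g q = q"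
  shows "q \<in> A"
proof -
  obtain p where p: "p \<in> A" "g p = p"
    using Banach_fix[OF compact_imp_complete[OF A(1)] A(2) c A(3)] lip by blast
  have "dist p q \<le> c * dist p q" using lip[of p q] p \<open>g q = q\<close> by simp
  then have "p = q" using \<open>c < 1\<close> by (smt (verit) mult_le_cancel_right1 zero_le_dist dist_eq_0_iff)
  then show ?thesis using p by simp
qed

lemma fixpt_contraction:
  fixes g :: "'a::complete_space \<Rightarrow> 'a"
  assumes "0 \<le> c" "c < 1" "\<And>x y. dist (g x) (g y) \<le> c * dist x y"
  shows "g (fixpt g) = fixpt g"
proof -
  have "\<exists>!x. g x = x" using banach_fix_type[of c g] assms by blast
  then show ?thesis unfolding fixpt_def by (rule theI')
qed

text \<open>Each point of A is the image of a point of A, and applying the maps shrinks distances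
  to B by the factor c; hence every point of A lies within c^n diam (A \<union> B) of B.\<close>
lemma self_covered_subset_invariant:
  fixes g :: "nat \<Rightarrow> 'a::metric_space \<Rightarrow> 'a"
  assumes c: "0 \<le> c" "c < 1"
    and lip: "\<And>i x y. i < N \<Longrightarrow> dist (g i x) (g i y) \<le> c * dist x y"
    and A: "bounded A" "A \<subseteq> (\<Union>i<N. g i ` A)"
    and B: "bounded B" "closed B" "B \<noteq> {}" "\<And>i. i < N \<Longrightarrow> g i ` B \<subseteq> B"
  shows "A \<subseteq> B"
proof
  have "bounded (A \<union> B)" using A(1) B(1) by simp
  then obtain D where D: "\<And>x y. x \<in> A \<union> B \<Longrightarrow> y \<in> A \<union> B \<Longrightarrow> dist x y \<le> D"
    unfolding bounded_two_points by blast
  have approx: "\<forall>a\<in>A. \<exists>b\<in>B. dist a b \<le> c ^ n * D" for n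
  proof (induction n)
    case 0
    then show ?case using B(3) D by auto
  next
    case (Suc n)
    show ?case
    proof
      fix a assume "a \<in> A"
      then obtain i a' where "i < N" "a' \<in> A" "a = g i a'" using A(2) by blast
      moreover obtain b where "b \<in> B" "dist a' b \<le> c ^ n * D" using Suc \<open>a' \<in> A\<close> by blast
      ultimately have "g i b \<in> B" "dist a (g i b) \<le> c ^ Suc n * D"
        using B(4) lip[of i a' b] mult_left_mono[of _ _ c] c by fastforce+
      then show "\<exists>b\<in>B. dist a b \<le> c ^ Suc n * D" by blast
    qed
  qed
  fix a assume "a \<in> A"
  have "infdist a B \<le> c ^ n * D" for n
    using approx \<open>a \<in> A\<close> by (meson infdist_le2)
  moreover have "(\<lambda>n. c ^ n * D) \<longlonglongrightarrow> 0"
    using c by (simp add: LIMSEQ_power_zero tendsto_mult_left_zero)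
  ultimately have "infdist a B \<le> 0" by (intro LIMSEQ_le_const) auto
  then show "a \<in> B" using B in_closed_iff_infdist_zero[of B a] infdist_nonneg[of a B] by simp
qed

inductive_set ifs_orbit :: "(nat \<Rightarrow> 'a \<Rightarrow> 'a) \<Rightarrow> nat \<Rightarrow> 'a \<Rightarrow> 'a set"
  for g :: "nat \<Rightarrow> 'a \<Rightarrow> 'a" and N :: nat and x0 :: 'a where
  base: "x0 \<in> ifs_orbit g N x0"
| step: "x \<in> ifs_orbit g N x0 \<Longrightarrow> i < N \<Longrightarrow> g i x \<in> ifs_orbit g N x0"

lemma ifs_orbit_bounded:
  fixes g :: "nat \<Rightarrow> 'a::metric_space \<Rightarrow> 'a"
  assumes c: "0 \<le> c" "c < 1"
    and lip: "\<And>i x y. i < N \<Longrightarrow> dist (g i x) (g i y) \<le> c * dist x y"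
  shows "bounded (ifs_orbit g N x0)"
proof -
  define M where "M = (\<Sum>i<N. dist (g i x0) x0)"
  define R where "R = M / (1 - c)"
  have "M \<ge> 0" unfolding M_def by (intro sum_nonneg) auto
  then have "R \<ge> 0" "c * R + M = R" unfolding R_def using c by (auto simp: field_simps)
  have "dist x0 x \<le> R" if "x \<in> ifs_orbit g N x0" for x
    using that
  proof induction
    case base
    show ?case using \<open>R \<ge> 0\<close> by simp
  next
    case (step x i)
    have "dist x0 (g i x) \<le> dist (g i x0) x0 + dist (g i x0) (g i x)"
      by (rule dist_triangle3)
    also have "\<dots> \<le> M + c * R"
      using lip[of i x0 x] step mult_left_mono[OF step.IH c(1)] M_def
      by (intro add_mono) (auto intro!: member_le_sum)
    finally show ?case using \<open>c * R + M = R\<close> by simp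
  qed
  then show ?thesis unfolding bounded_any_center[of _ x0] by blast
qed

lemma ifs_orbit_self_covered:
  assumes "0 < N" "g 0 x0 = x0"
  shows "ifs_orbit g N x0 \<subseteq> (\<Union>i<N. g i ` ifs_orbit g N x0)"
proof
  fix x assume "x \<in> ifs_orbit g N x0"
  then show "x \<in> (\<Union>i<N. g i ` ifs_orbit g N x0)"
  proof cases
    case base
    have "x0 \<in> g 0 ` ifs_orbit g N x0" using assms(2) ifs_orbit.base by (metis image_eqI)
    then show ?thesis using base assms(1) by blast
  qed auto
qed

text \<open>If S is covered by finitely many balls of radius r, then its images, and hence S itself,
  are covered by finitely many balls of radius c r; so S is totally bounded.\<close>
lemma self_covered_compact_closure:
  fixes g :: "nat \<Rightarrow> 'a::complete_space \<Rightarrow> 'a"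
  assumes c: "0 \<le> c" "c < 1"
    and lip: "\<And>i x y. i < N \<Longrightarrow> dist (g i x) (g i y) \<le> c * dist x y"
    and S: "bounded S" "S \<subseteq> (\<Union>i<N. g i ` S)"
  shows "compact (closure S)"
proof (cases "S = {}")
  case False
  then obtain x0 where "x0 \<in> S" by blast
  obtain R where R: "\<And>x. x \<in> S \<Longrightarrow> dist x0 x \<le> R"
    using S(1) unfolding bounded_any_center[of S x0] by blast
  have net: "\<exists>k. finite k \<and> S \<subseteq> (\<Union>y\<in>k. cball y (c ^ n * R))" for n
  proof (induction n)
    case 0
    show ?case using R by (intro exI[of _ "{x0}"]) auto
  next
    case (Suc n)
    then obtain k where k: "finite k" "S \<subseteq> (\<Union>y\<in>k. cball y (c ^ n * R))" by blast
    define k' where "k' = (\<lambda>(i, y). g i y) ` ({..<N} \<times> k)"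
    have "S \<subseteq> (\<Union>y\<in>k'. cball y (c ^ Suc n * R))"
    proof
      fix x assume "x \<in> S"
      then obtain i x' where i: "i < N" "x' \<in> S" "x = g i x'" using S(2) by blast
      then obtain y where y: "y \<in> k" "dist y x' \<le> c ^ n * R" using k(2) by auto
      have "dist (g i y) x \<le> c * dist y x'" using lip i by simp
      also have "\<dots> \<le> c * (c ^ n * R)" using y(2) c(1) by (rule mult_left_mono)
      finally have "x \<in> cball (g i y) (c ^ Suc n * R)" by (simp add: mult.assoc)
      moreover have "g i y \<in> k'"
        unfolding k'_def using i(1) y(1) by (auto intro: image_eqI[of _ _ "(i, y)"])
      ultimately show "x \<in> (\<Union>y\<in>k'. cball y (c ^ Suc n * R))" by blast
    qed
    moreover have "finite k'" unfolding k'_def using k(1) by simp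
    ultimately show ?case by blast
  qed
  show ?thesis
    unfolding compact_eq_totally_bounded
  proof (intro conjI allI impI)
    show "complete (closure S)" by (simp add: complete_eq_closed)
    fix e :: real assume "e > 0"
    have "(\<lambda>n. c ^ n * R) \<longlonglongrightarrow> 0"
      using c by (simp add: LIMSEQ_power_zero tendsto_mult_left_zero)
    then have "\<forall>\<^sub>F n in sequentially. c ^ n * R < e / 2"
      using \<open>e > 0\<close> by (intro order_tendstoD) auto
    then obtain n where n: "c ^ n * R < e / 2" by (auto simp: eventually_sequentially)
    obtain k where k: "finite k" "S \<subseteq> (\<Union>y\<in>k. cball y (c ^ n * R))" using net by blast
    then have "closure S \<subseteq> (\<Union>y\<in>k. cball y (c ^ n * R))"
      by (intro closure_minimal) auto
    also have "\<dots> \<subseteq> (\<Union>y\<in>k. ball y e)" using n \<open>e > 0\<close> by auto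
    finally show "\<exists>k. finite k \<and> closure S \<subseteq> (\<Union>y\<in>k. ball y e)" using k(1) by blast
  qed
qed simp

lemma closure_ifs_invariant:
  fixes g :: "nat \<Rightarrow> 'a::topological_space \<Rightarrow> 'a"
  assumes cont: "\<And>i. i < N \<Longrightarrow> continuous_on UNIV (g i)"
    and "(\<Union>i<N. g i ` S) = S"
  shows "closure (\<Union>i<N. g i ` closure S) = closure S"
proof
  have "g i ` closure S \<subseteq> closure S" if "i < N" for i
    using assms closure_subset that
    by (intro image_closure_subset continuous_on_subset[OF cont]) auto
  then show "closure (\<Union>i<N. g i ` closure S) \<subseteq> closure S"
    by (intro closure_minimal) auto
  have "closure S = closure (\<Union>i<N. g i ` S)" using assms(2) by simp
  also have "\<dots> \<subseteq> closure (\<Union>i<N. g i ` closure S)"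
    by (intro closure_mono UN_mono image_mono closure_subset order_refl)
  finally show "closure S \<subseteq> closure (\<Union>i<N. g i ` closure S)" .
qed

lemma contraction_continuous_on:
  fixes g :: "'a::metric_space \<Rightarrow> 'b::metric_space"
  assumes "0 \<le> c" "\<And>x y. dist (g x) (g y) \<le> c * dist x y"
  shows "continuous_on S g"
  using assms by (intro lipschitz_on_continuous_on[of c] lipschitz_onI) auto

lemma ifs_invariant_compact_eq:
  fixes g :: "nat \<Rightarrow> 'a::t2_space \<Rightarrow> 'a"
  assumes "\<And>i. i < N \<Longrightarrow> continuous_on A (g i)"
    and "compact A" "closure (\<Union>i<N. g i ` A) = A"
  shows "(\<Union>i<N. g i ` A) = A"
proof -
  have "compact (\<Union>i<N. g i ` A)"
    using assms by (intro compact_UN) (auto intro: compact_continuous_image)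
  then show ?thesis using assms(3) by (simp add: closure_closed compact_imp_closed)
qed

text \<open>The attractor is the closure of the orbit of the fixed point of the first map.\<close>
lemma ifs_attractor_ex1:
  fixes g :: "nat \<Rightarrow> 'a::complete_space \<Rightarrow> 'a"
  assumes c: "0 \<le> c" "c < 1" and "0 < N"
    and lip: "\<And>i x y. i < N \<Longrightarrow> dist (g i x) (g i y) \<le> c * dist x y"
  shows "\<exists>!A. A \<noteq> {} \<and> compact A \<and> closure (\<Union>i<N. g i ` A) = A"
proof -
  have cont: "continuous_on S (g i)" if "i < N" for i S
    using lip that c by (intro contraction_continuous_on[of c]) auto
  obtain x0 where x0: "g 0 x0 = x0"
    using banach_fix_type[OF c, of "g 0"] lip \<open>0 < N\<close> by blast
  define S where "S = ifs_orbit g N x0"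
  have "(\<Union>i<N. g i ` S) = S"
    using ifs_orbit_self_covered[of N g x0, OF \<open>0 < N\<close> x0]
    unfolding S_def by (auto intro: ifs_orbit.step)
  then have inv: "closure (\<Union>i<N. g i ` closure S) = closure S"
    using cont by (intro closure_ifs_invariant) auto
  have compact: "compact (closure S)"
    using ifs_orbit_bounded[OF c lip] ifs_orbit_self_covered[of N g x0, OF \<open>0 < N\<close> x0]
    unfolding S_def by (intro self_covered_compact_closure[OF c lip]) auto
  have "x0 \<in> S" unfolding S_def by (rule ifs_orbit.base)
  then have nonempty: "closure S \<noteq> {}" using closure_subset by blast
  have subset: "A \<subseteq> B"
    if A: "compact A" "closure (\<Union>i<N. g i ` A) = A"
    and B: "B \<noteq> {}" "compact B" "closure (\<Union>i<N. g i ` B) = B" for A B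
  proof (rule self_covered_subset_invariant[OF c lip])
    show "bounded A" "bounded B" "closed B" "B \<noteq> {}"
      using A(1) B by (simp_all add: compact_imp_bounded compact_imp_closed)
    show "A \<subseteq> (\<Union>i<N. g i ` A)" using ifs_invariant_compact_eq[OF cont A] by simp
    show "g i ` B \<subseteq> B" if "i < N" for i
      using ifs_invariant_compact_eq[OF cont B(2,3)] that by blast
  qed
  show ?thesis
  proof (rule ex1I[of _ "closure S"])
    fix B assume "B \<noteq> {} \<and> compact B \<and> closure (\<Union>i<N. g i ` B) = B"
    then show "B = closure S"
      using subset[of B "closure S"] subset[of "closure S" B] compact nonempty inv by blast
  qed (use compact nonempty inv in blast)
qed

lemma lip_family_less_one_nonexpansive:
  fixes f :: "nat \<Rightarrow> real \<Rightarrow> 'a::metric_space \<Rightarrow> 'a"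
  assumes "0 < N" "lip_family f N t < 1" "i < N"
  shows "dist (f i t x) (f i t y) \<le> dist x y"
proof -
  obtain c where "c < 1" "dist (f i t x) (f i t y) \<le> c * dist x y"
    using lip_family_less_one_contraction[OF assms(1,2)] assms(3) by blast
  moreover have "c * dist x y \<le> dist x y" using mult_right_mono[of c 1 "dist x y"] \<open>c < 1\<close> by simp
  ultimately show ?thesis by linarith
qed

lemma attractor_properties:
  fixes f :: "nat \<Rightarrow> real \<Rightarrow> 'a::complete_space \<Rightarrow> 'a"
  assumes "0 < N" "lip_family f N t < 1"
  shows "attractor f N t \<noteq> {}" "compact (attractor f N t)"
    and "ifs_img f N t (attractor f N t) = attractor f N t"
    and "\<And>i. i < N \<Longrightarrow> fixpt (f i t) \<in> attractor f N t"
proof -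
  obtain c where c: "0 \<le> c" "c < 1"
    and lip: "\<And>i x y. i < N \<Longrightarrow> dist (f i t x) (f i t y) \<le> c * dist x y"
    using lip_family_less_one_contraction[OF assms] by blast
  let ?attr = "\<lambda>A. A \<noteq> {} \<and> compact A \<and> ifs_img f N t A = A"
  have "\<exists>!A. ?attr A"
    unfolding ifs_img_def by (rule ifs_attractor_ex1[of c N "\<lambda>i. f i t", OF c \<open>0 < N\<close> lip])
  then have "?attr (attractor f N t)"
    unfolding attractor_def by (rule theI'[of ?attr])
  then show A: "attractor f N t \<noteq> {}" "compact (attractor f N t)"
    and inv: "ifs_img f N t (attractor f N t) = attractor f N t" by blast+
  fix i assume "i < N"
  have "f i t ` attractor f N t \<subseteq> closure (\<Union>j<N. f j t ` attractor f N t)"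
    using \<open>i < N\<close> by (intro subset_trans[OF _ closure_subset]) blast
  also have "\<dots> = attractor f N t" using inv unfolding ifs_img_def .
  finally have "f i t ` attractor f N t \<subseteq> attractor f N t" .
  moreover have "f i t (fixpt (f i t)) = fixpt (f i t)"
    by (rule fixpt_contraction[OF c lip[OF \<open>i < N\<close>]])
  ultimately show "fixpt (f i t) \<in> attractor f N t"
    by (rule contraction_fixpoint_in_invariant[OF c lip[OF \<open>i < N\<close>] A(2,1)])
qed

lemma hausdorff_dist_commute: "hausdorff_dist A B = hausdorff_dist B A"
  unfolding hausdorff_dist_def by (rule max.commute)

lemma infdist_le_hausdorff_dist:
  assumes "compact A" "x \<in> A"
  shows "infdist x B \<le> hausdorff_dist A B"
proof -
  have "compact ((\<lambda>a. infdist a B) ` A)"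
    using assms by (intro compact_continuous_image continuous_on_infdist continuous_on_id)
  then have "bdd_above ((\<lambda>a. infdist a B) ` A)"
    by (intro bounded_imp_bdd_above compact_imp_bounded)
  then show ?thesis
    unfolding hausdorff_dist_def using assms by (intro max.coboundedI1 cSUP_upper)
qed

lemma infdist_less_imp_dist_less:
  assumes "A \<noteq> {}" "infdist x A < r"
  shows "\<exists>y\<in>A. dist x y < r"
proof -
  have "bdd_below ((\<lambda>a. dist x a) ` A)" by (rule bdd_belowI[of _ 0]) auto
  then show ?thesis using assms by (simp add: infdist_notempty cINF_less_iff)
qed

lemma LIMSEQ_zero_dominated:
  fixes u v :: "nat \<Rightarrow> real"
  assumes "\<And>n. 0 \<le> u n" "\<And>n. u n \<le> v n" "v \<longlonglongrightarrow> 0"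
  shows "u \<longlonglongrightarrow> 0"
  by (rule tendsto_sandwich[OF _ _ tendsto_const assms(3)]) (simp_all add: assms)

lemma hausdorff_dist_tendsto_zero_nearby:
  fixes X Y :: "nat \<Rightarrow> 'a::metric_space set"
  assumes "\<And>n. compact (X n)" "\<And>n. Y n \<noteq> {}"
    and "(\<lambda>n. hausdorff_dist (X n) (Y n)) \<longlonglongrightarrow> 0" and "\<And>n. x n \<in> X n"
  shows "\<exists>y. (\<forall>n. y n \<in> Y n) \<and> (\<lambda>n. dist (x n) (y n)) \<longlonglongrightarrow> 0"
proof -
  have "\<forall>n. \<exists>z. z \<in> Y n \<and> dist (x n) z < hausdorff_dist (X n) (Y n) + inverse (real (Suc n))"
  proof
    fix n
    have "infdist (x n) (Y n) < hausdorff_dist (X n) (Y n) + inverse (real (Suc n))"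
      using infdist_le_hausdorff_dist[OF assms(1)[of n] assms(4)[of n], of "Y n"]
        positive_imp_inverse_positive[of "real (Suc n)"] by linarith
    then show "\<exists>z. z \<in> Y n \<and> dist (x n) z < hausdorff_dist (X n) (Y n) + inverse (real (Suc n))"
      using infdist_less_imp_dist_less[OF assms(2)] by blast
  qed
  from choice[OF this] obtain y where
    y: "\<forall>n. y n \<in> Y n \<and> dist (x n) (y n) < hausdorff_dist (X n) (Y n) + inverse (real (Suc n))"
    by blast
  have "(\<lambda>n. hausdorff_dist (X n) (Y n) + inverse (real (Suc n))) \<longlonglongrightarrow> 0"
    using tendsto_add[OF assms(3) LIMSEQ_inverse_real_of_nat] by simp
  then have "(\<lambda>n. dist (x n) (y n)) \<longlonglongrightarrow> 0"
    by (rule LIMSEQ_zero_dominated[rotated 2]) (use y in \<open>simp_all add: less_imp_le\<close>)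
  with y show ?thesis by blast
qed

lemma LIMSEQ_dist_zero_imp_same_limit:
  fixes x y :: "nat \<Rightarrow> 'a::metric_space"
  assumes "(\<lambda>n. dist (x n) (y n)) \<longlonglongrightarrow> 0" "x \<longlonglongrightarrow> a"
  shows "y \<longlonglongrightarrow> a"
proof -
  have "(\<lambda>n. dist (x n) a) \<longlonglongrightarrow> 0" using assms(2) by (rule tendsto_dist_iff[THEN iffD1])
  then have "(\<lambda>n. dist (x n) (y n) + dist (x n) a) \<longlonglongrightarrow> 0"
    using tendsto_add[OF assms(1)] by simp
  then have "(\<lambda>n. dist (y n) a) \<longlonglongrightarrow> 0"
    by (rule LIMSEQ_zero_dominated[OF zero_le_dist dist_triangle3])
  then show ?thesis by (rule tendsto_dist_iff[THEN iffD2])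
qed

lemma hausdorff_limit_mem:
  fixes A :: "nat \<Rightarrow> 'a::metric_space set"
  assumes "\<And>n. compact (A n)" "K \<noteq> {}" "closed K"
    and "(\<lambda>n. hausdorff_dist (A n) K) \<longlonglongrightarrow> 0"
    and "\<And>n. x n \<in> A n" "x \<longlonglongrightarrow> y"
  shows "y \<in> K"
proof -
  obtain k where k: "\<And>n. k n \<in> K" "(\<lambda>n. dist (x n) (k n)) \<longlonglongrightarrow> 0"
    using hausdorff_dist_tendsto_zero_nearby[of A "\<lambda>_. K", OF assms(1) _ assms(4,5)] assms(2)
    by blast
  have "k \<longlonglongrightarrow> y"
    using k(2) assms(6) by (rule LIMSEQ_dist_zero_imp_same_limit)
  then show ?thesis using k(1) \<open>closed K\<close> closed_sequentially by blast
qed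

lemma hausdorff_limit_approx:
  fixes A :: "nat \<Rightarrow> 'a::metric_space set"
  assumes "\<And>n. A n \<noteq> {}" "compact K"
    and "(\<lambda>n. hausdorff_dist (A n) K) \<longlonglongrightarrow> 0" and "y \<in> K"
  shows "\<exists>x. (\<forall>n. x n \<in> A n) \<and> x \<longlonglongrightarrow> y"
proof -
  have "(\<lambda>n. hausdorff_dist K (A n)) \<longlonglongrightarrow> 0"
    using assms(3) by (simp only: hausdorff_dist_commute[of K])
  then obtain x where "\<forall>n. x n \<in> A n" "(\<lambda>n. dist y (x n)) \<longlonglongrightarrow> 0"
    using hausdorff_dist_tendsto_zero_nearby[of "\<lambda>_. K" A "\<lambda>_. y", OF assms(2) assms(1) _ assms(4)]
    by blast
  then show ?thesis using LIMSEQ_dist_zero_imp_same_limit[OF _ tendsto_const] by blast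
qed

lemma nonexpansive_tendsto_compose:
  fixes g :: "nat \<Rightarrow> 'a::metric_space \<Rightarrow> 'b::metric_space"
  assumes "\<And>n x y. dist (g n x) (g n y) \<le> dist x y" "x \<longlonglongrightarrow> a" "(\<lambda>n. g n a) \<longlonglongrightarrow> b"
  shows "(\<lambda>n. g n (x n)) \<longlonglongrightarrow> b"
proof (rule LIMSEQ_dist_zero_imp_same_limit[OF _ assms(3)])
  have "(\<lambda>n. dist (x n) a) \<longlonglongrightarrow> 0" using assms(2) by (rule tendsto_dist_iff[THEN iffD1])
  then show "(\<lambda>n. dist (g n a) (g n (x n))) \<longlonglongrightarrow> 0"
    by (rule LIMSEQ_zero_dominated[rotated 2]) (simp_all add: assms(1) dist_commute)
qed

lemma nonexpansive_pointwise_imp_uniform_limit: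
  fixes g :: "nat \<Rightarrow> 'a::metric_space \<Rightarrow> 'b::metric_space"
  assumes "compact K" and nonexp: "\<And>n x y. dist (g n x) (g n y) \<le> dist x y"
    and lim: "\<And>x. x \<in> K \<Longrightarrow> (\<lambda>n. g n x) \<longlonglongrightarrow> l x"
  shows "uniform_limit K g l sequentially"
  unfolding uniform_limit_iff
proof (intro allI impI)
  fix e :: real assume "e > 0"
  then have "e / 3 > 0" by simp
  then obtain k where k: "finite k" "k \<subseteq> K" "K \<subseteq> (\<Union>p\<in>k. ball p (e / 3))"
    using seq_compact_imp_totally_bounded[OF compact_imp_seq_compact[OF \<open>compact K\<close>], rule_format,
        OF \<open>e / 3 > 0\<close>] by (elim exE conjE)
  have l_nonexp: "dist (l x) (l y) \<le> dist x y" if "x \<in> K" "y \<in> K" for x y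
    using nonexp by (intro LIMSEQ_le_const2[OF tendsto_dist[OF lim lim]] that) blast+
  have "\<forall>p\<in>k. \<forall>\<^sub>F n in sequentially. dist (g n p) (l p) < e / 3"
    using lim k(2) \<open>e / 3 > 0\<close> by (intro ballI tendstoD) auto
  then have "\<forall>\<^sub>F n in sequentially. \<forall>p\<in>k. dist (g n p) (l p) < e / 3"
    by (rule eventually_ball_finite[OF k(1)])
  then show "\<forall>\<^sub>F n in sequentially. \<forall>x\<in>K. dist (g n x) (l x) < e"
  proof eventually_elim
    case (elim n)
    show ?case
    proof
      fix x assume "x \<in> K"
      then obtain p where p: "p \<in> k" "x \<in> ball p (e / 3)" using k(3) by blast
      then have "dist p x < e / 3" by simp
      have "dist (g n x) (l x) \<le> dist (g n x) (g n p) + dist (g n p) (l p) + dist (l p) (l x)"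
        using dist_triangle[of "g n x" "l x" "g n p"] dist_triangle[of "g n p" "l x" "l p"] by linarith
      moreover have "dist (g n x) (g n p) < e / 3"
        using nonexp[of n x p] \<open>dist p x < e / 3\<close> dist_commute[of p x] by linarith
      moreover have "dist (g n p) (l p) < e / 3" using elim p(1) by blast
      moreover have "dist (l p) (l x) < e / 3"
        using l_nonexp[of p x] p(1) k(2) \<open>x \<in> K\<close> \<open>dist p x < e / 3\<close> by auto
      ultimately show "dist (g n x) (l x) < e" by linarith
    qed
  qed
qed

lemma uniform_limit_diagonal_tendsto:
  fixes g :: "nat \<Rightarrow> nat \<Rightarrow> 'a \<Rightarrow> 'b::metric_space"
  assumes "\<And>j. j < N \<Longrightarrow> uniform_limit K (g j) (l j) sequentially"
    and "\<And>n. i n < N" "\<And>n. c n \<in> K"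
  shows "(\<lambda>n. dist (g (i n) n (c n)) (l (i n) (c n))) \<longlonglongrightarrow> 0"
proof (rule tendstoI)
  fix e :: real assume "e > 0"
  have "\<forall>j\<in>{..<N}. \<forall>\<^sub>F n in sequentially. \<forall>y\<in>K. dist (g j n y) (l j y) < e"
    using assms(1) \<open>e > 0\<close> unfolding uniform_limit_iff by blast
  then have "\<forall>\<^sub>F n in sequentially. \<forall>j\<in>{..<N}. \<forall>y\<in>K. dist (g j n y) (l j y) < e"
    by (rule eventually_ball_finite[OF finite_lessThan])
  then show "\<forall>\<^sub>F n in sequentially. dist (dist (g (i n) n (c n)) (l (i n) (c n))) 0 < e"
    by eventually_elim (use assms(2,3) in simp)
qed

context
  fixes f :: "nat \<Rightarrow> real \<Rightarrow> 'a::metric_space \<Rightarrow> 'a"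
    and N :: nat and tn :: "nat \<Rightarrow> real" and t :: real
    and A :: "nat \<Rightarrow> 'a set" and K :: "'a set"
  assumes A: "\<And>n. compact (A n)" "\<And>n. A n \<noteq> {}" "\<And>n. ifs_img f N (tn n) (A n) = A n"
    and K: "compact K" "K \<noteq> {}" "(\<lambda>n. hausdorff_dist (A n) K) \<longlonglongrightarrow> 0"
    and nonexp: "\<And>i n x y. i < N \<Longrightarrow> dist (f i (tn n) x) (f i (tn n) y) \<le> dist x y"
    and pointwise: "\<And>i x. i < N \<Longrightarrow> (\<lambda>n. f i (tn n) x) \<longlonglongrightarrow> f i t x"
begin

lemma ifs_limit_image_subset:
  assumes "i < N" "a \<in> K"
  shows "f i t a \<in> K"
proof -
  obtain x where x: "\<forall>n. x n \<in> A n" "x \<longlonglongrightarrow> a"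
    using hausdorff_limit_approx[OF A(2) K(1,3) \<open>a \<in> K\<close>] by (elim exE conjE)
  have "f i (tn n) (x n) \<in> (\<Union>j<N. f j (tn n) ` A n)" for n
    using x(1) \<open>i < N\<close> by blast
  then have "f i (tn n) (x n) \<in> A n" for n
    using closure_subset A(3)[of n] unfolding ifs_img_def by (metis subsetD)
  moreover have "(\<lambda>n. f i (tn n) (x n)) \<longlonglongrightarrow> f i t a"
    using nonexp[OF \<open>i < N\<close>] x(2) pointwise[OF \<open>i < N\<close>] by (rule nonexpansive_tendsto_compose)
  ultimately show ?thesis
    by (rule hausdorff_limit_mem[OF A(1) K(2) compact_imp_closed[OF K(1)] K(3)])
qed

lemma ifs_limit_preimages:
  assumes "\<forall>n. x n \<in> A n"
  shows "\<exists>i b. (\<forall>n. i n < N \<and> b n \<in> A n) \<and> (\<lambda>n. dist (f (i n) (tn n) (b n)) (x n)) \<longlonglongrightarrow> 0"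
proof -
  have "\<forall>n. \<exists>p. fst p < N \<and> snd p \<in> A n \<and>
      dist (f (fst p) (tn n) (snd p)) (x n) < inverse (real (Suc n))"
  proof
    fix n
    have "x n \<in> closure (\<Union>j<N. f j (tn n) ` A n)"
      using A(3)[of n] assms unfolding ifs_img_def by simp
    moreover have "0 < inverse (real (Suc n))" by simp
    ultimately obtain y where "y \<in> (\<Union>j<N. f j (tn n) ` A n)" "dist y (x n) < inverse (real (Suc n))"
      using closure_approachable by blast
    then show "\<exists>p. fst p < N \<and> snd p \<in> A n \<and>
        dist (f (fst p) (tn n) (snd p)) (x n) < inverse (real (Suc n))"
      by auto
  qed
  from choice[OF this] obtain p where p: "\<forall>n. fst (p n) < N \<and> snd (p n) \<in> A n \<and>
      dist (f (fst (p n)) (tn n) (snd (p n))) (x n) < inverse (real (Suc n))"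
    by (elim exE)
  have "(\<lambda>n. dist (f (fst (p n)) (tn n) (snd (p n))) (x n)) \<longlonglongrightarrow> 0"
    by (rule LIMSEQ_zero_dominated[OF zero_le_dist _ LIMSEQ_inverse_real_of_nat])
      (use p in \<open>simp add: less_imp_le\<close>)
  with p show ?thesis by (intro exI[of _ "\<lambda>n. fst (p n)"] exI[of _ "\<lambda>n. snd (p n)"]) simp
qed

text \<open>A point a of K is the limit of points x_n of A_n, which are (nearly) images of points b_n
  of A_n, which in turn are close to points c_n of K; by uniform convergence of the maps on K,
  the images of the c_n under the limit maps converge to a.\<close>
lemma ifs_limit_subset_closure_image:
  assumes "a \<in> K"
  shows "a \<in> closure (\<Union>i<N. f i t ` K)"
proof -
  obtain x where x: "\<forall>n. x n \<in> A n" "x \<longlonglongrightarrow> a"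
    using hausdorff_limit_approx[OF A(2) K(1,3) \<open>a \<in> K\<close>] by (elim exE conjE)
  obtain i b where ib: "\<forall>n. i n < N \<and> b n \<in> A n"
    and image_close: "(\<lambda>n. dist (f (i n) (tn n) (b n)) (x n)) \<longlonglongrightarrow> 0"
    using ifs_limit_preimages[OF x(1)] by (elim exE conjE)
  obtain c where c: "\<forall>n. c n \<in> K" "(\<lambda>n. dist (b n) (c n)) \<longlonglongrightarrow> 0"
    using hausdorff_dist_tendsto_zero_nearby[OF A(1) K(2) K(3)] ib by blast
  have "uniform_limit K (\<lambda>n. f j (tn n)) (f j t) sequentially" if "j < N" for j
    using nonexp[OF that] pointwise[OF that] by (rule nonexpansive_pointwise_imp_uniform_limit[OF K(1)])
  moreover have "i n < N" "c n \<in> K" for n using ib c(1) by simp_all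
  ultimately have uniform: "(\<lambda>n. dist (f (i n) (tn n) (c n)) (f (i n) t (c n))) \<longlonglongrightarrow> 0"
    by (rule uniform_limit_diagonal_tendsto[where g = "\<lambda>j n. f j (tn n)" and l = "\<lambda>j. f j t"])
  have "(\<lambda>n. dist (x n) a) \<longlonglongrightarrow> 0" using x(2) by (rule tendsto_dist_iff[THEN iffD1])
  then have "(\<lambda>n. dist (f (i n) (tn n) (c n)) (f (i n) t (c n)) + dist (b n) (c n)
      + dist (f (i n) (tn n) (b n)) (x n) + dist (x n) a) \<longlonglongrightarrow> 0"
    using tendsto_add[OF tendsto_add[OF tendsto_add[OF uniform c(2)] image_close]] by simp
  moreover have "dist (f (i n) t (c n)) a \<le> dist (f (i n) (tn n) (c n)) (f (i n) t (c n))
      + dist (b n) (c n) + dist (f (i n) (tn n) (b n)) (x n) + dist (x n) a" for n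
  proof -
    have "dist (f (i n) (tn n) (c n)) (f (i n) (tn n) (b n)) \<le> dist (b n) (c n)"
      using nonexp[of "i n" n "c n" "b n"] ib dist_commute[of "b n" "c n"] by simp
    then show ?thesis
      using dist_triangle[of "f (i n) t (c n)" a "f (i n) (tn n) (c n)"]
        dist_triangle[of "f (i n) (tn n) (c n)" a "f (i n) (tn n) (b n)"]
        dist_triangle[of "f (i n) (tn n) (b n)" a "x n"]
        dist_commute[of "f (i n) t (c n)" "f (i n) (tn n) (c n)"] by linarith
  qed
  ultimately have "(\<lambda>n. dist (f (i n) t (c n)) a) \<longlonglongrightarrow> 0"
    by (intro LIMSEQ_zero_dominated[OF zero_le_dist])
  then have "(\<lambda>n. f (i n) t (c n)) \<longlonglongrightarrow> a" by (rule tendsto_dist_iff[THEN iffD2])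
  moreover have "\<forall>n. f (i n) t (c n) \<in> (\<Union>i<N. f i t ` K)" using ib c(1) by blast
  ultimately show ?thesis unfolding closure_sequential by (intro exI[of _ "\<lambda>n. f (i n) t (c n)"]) simp
qed

lemma ifs_img_hausdorff_limit: "ifs_img f N t K = K"
  unfolding ifs_img_def
proof
  show "closure (\<Union>i<N. f i t ` K) \<subseteq> K"
    using ifs_limit_image_subset compact_imp_closed[OF K(1)] by (intro closure_minimal) auto
  show "K \<subseteq> closure (\<Union>i<N. f i t ` K)"
    using ifs_limit_subset_closure_image by blast
qed

end

theorem mainTheorem8:
  fixes f :: "nat \<Rightarrow> real \<Rightarrow> 'a::complete_space \<Rightarrow> 'a"
    and N :: nat and Aup :: "'a set"
  assumes N2: "N \<ge> 2"
    and cont: "\<And>i t. i < N \<Longrightarrow> t \<in> {0..1} \<Longrightarrow> continuous_on UNIV (f i t)"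
    and H1: "\<And>i x. i < N \<Longrightarrow> continuous_on {0..1} (\<lambda>t. f i t x)"
    and H2: "\<And>t. t \<in> {0..<1} \<Longrightarrow> lip_family f N t < 1"
    and up: "upper_transition_attractor f N Aup"
  shows "ifs_img f N 1 Aup = Aup \<and>
    (\<forall>q :: nat \<Rightarrow> 'a.
       (\<forall>i<N. ((\<lambda>t. fixpt (f i t)) \<longlongrightarrow> q i) (at_left 1)) \<longrightarrow>
       q ` {..<N} \<subseteq> Aup \<and>
       (\<forall>Alow. lower_transition_attractor f N (q ` {..<N}) Alow \<longrightarrow> Alow \<subseteq> Aup))"
proof -
  have "0 < N" using N2 by simp
  obtain tn where tn: "\<forall>n. tn n \<in> {0..<1}" "tn \<longlonglongrightarrow> 1"
    and lim: "(\<lambda>n. hausdorff_dist (attractor f N (tn n)) Aup) \<longlonglongrightarrow> 0"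
    and Aup: "Aup \<noteq> {}" "compact Aup"
    using up unfolding upper_transition_attractor_def by blast
  note attr = attractor_properties[OF \<open>0 < N\<close> H2[OF tn(1)[rule_format]]]
  have pointwise: "(\<lambda>n. f i (tn n) x) \<longlonglongrightarrow> f i 1 x" if "i < N" for i x
    using continuous_on_tendsto_compose[OF H1[OF that] tn(2)] tn(1) by (simp add: less_imp_le)
  have invariant: "ifs_img f N 1 Aup = Aup"
    using lip_family_less_one_nonexpansive[OF \<open>0 < N\<close> H2[OF tn(1)[rule_format]]]
    by (intro ifs_img_hausdorff_limit[of "\<lambda>n. attractor f N (tn n)" f N tn Aup 1,
          OF attr(2,1,3) Aup(2,1) lim _ pointwise])
  moreover have "q ` {..<N} \<subseteq> Aup"
    if q: "\<forall>i<N. ((\<lambda>t. fixpt (f i t)) \<longlongrightarrow> q i) (at_left 1)" for q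
  proof
    fix y assume "y \<in> q ` {..<N}"
    then obtain i where "i < N" "y = q i" by blast
    have "filterlim tn (at_left 1) sequentially"
      using tn by (intro tendsto_imp_filterlim_at_left always_eventually) auto
    then have "(\<lambda>n. fixpt (f i (tn n))) \<longlonglongrightarrow> q i"
      using q \<open>i < N\<close> filterlim_compose by blast
    then show "y \<in> Aup"
      using hausdorff_limit_mem[of "\<lambda>n. attractor f N (tn n)", OF attr(2) Aup(1)
          compact_imp_closed[OF Aup(2)] lim attr(4)[OF \<open>i < N\<close>]] \<open>y = q i\<close> by blast
  qed
  ultimately show ?thesis unfolding lower_transition_attractor_def by blast
qed

end
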